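(* Let $R,S\in GL(2,\mathbb{C})$ be diagonalizable matrices with eigenvalues $r_1,r_2\in S^1$ and $s_1,s_2\in S^1$ respectively, such that $r_1\ne r_2$, $s_1\ne s_2$ and $\{r_1,r_2\}\cap\{s_1,s_2\}=\emptyset$. Suppose that $1$ is an eigenvalue of $RS^{-1}$. Then the eigenspaces $E_{r_1},E_{r_2},E_{s_1},E_{s_2}$, regarded as points of $\mathbb{CP}^1$, are pairwise distinct and lie on a circle in $\mathbb{CP}^1$.
   Context: Here $S^1$ is the unit circle in $\mathbb{C}$, $E_{r}$ denotes the eigenspace (a complex line in $\mathbb{C}^2$, i.e. a point of $\mathbb{CP}^1$) for the eigenvalue $r$, and a circle in $\mathbb{CP}^1$ means the image of the real projective line $\mathbb{RP}^1\subset\mathbb{CP}^1$ under a Möbius transformation (a round circle or a line together with $\infty$ in an affine chart). *)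

theory Defs
  imports "HOL-Analysis.Analysis"
begin

definition is_eigenvalue :: "complex^2^2 \<Rightarrow> complex \<Rightarrow> bool" where
  "is_eigenvalue A r \<longleftrightarrow> (\<exists>v. v \<noteq> 0 \<and> A *v v = r *s v)"

definition eigenspace2 :: "complex^2^2 \<Rightarrow> complex \<Rightarrow> (complex^2) set" where
  "eigenspace2 A r = {v. A *v v = r *s v}"

definition diagonalizable2 :: "complex^2^2 \<Rightarrow> bool" where
  "diagonalizable2 A \<longleftrightarrow> (\<exists>P D :: complex^2^2. invertible P \<and>
      (\<forall>i j. i \<noteq> j \<longrightarrow> D $ i $ j = 0) \<and> A = P ** D ** matrix_inv P)"

text \<open>The complex line spanned by a vector (a point of CP^1 when v is nonzero).\<close>
definition cline :: "complex^2 \<Rightarrow> (complex^2) set" where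
  "cline v = {c *s v | c. True}"

text \<open>A collection of points of CP^1 (complex lines in C^2) lies on a circle:
  they all lie in the image of RP^1 (lines spanned by nonzero real vectors)
  under a Moebius transformation (an invertible 2x2 complex matrix).\<close>
definition on_circle_CP1 :: "(complex^2) set set \<Rightarrow> bool" where
  "on_circle_CP1 Ls \<longleftrightarrow> (\<exists>M::complex^2^2. invertible M \<and>
     (\<forall>L\<in>Ls. \<exists>w::real^2. w \<noteq> 0 \<and>
        L = cline (M *v (\<chi> i. complex_of_real (w $ i)))))"

end

theory Submission
  imports Defs
begin

text \<open>Since 1 is an eigenvalue of \<open>R S\<^sup>-\<^sup>1\<close>, there is a vector \<open>w \<noteq> 0\<close> with \<open>R w = S w\<close>; as the
  spectra of \<open>R\<close> and \<open>S\<close> are disjoint, \<open>w\<close> is an eigenvector of neither. For a 2x2 matrix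
  with eigenvalues \<open>\<alpha> \<noteq> \<beta>\<close> the vector \<open>A w - \<beta> w\<close> spans the \<open>\<alpha>\<close>-eigenline unless it vanishes, so \<open>E\<^sub>s\<^sub>1\<close> and
  \<open>E\<^sub>s\<^sub>2\<close> are spanned by \<open>R w - s\<^sub>2 w\<close> and \<open>R w - s\<^sub>1 w\<close>. Writing \<open>w = u + v\<close> with
  \<open>u \<in> E\<^sub>r\<^sub>1\<close>, \<open>v \<in> E\<^sub>r\<^sub>2\<close>, these are \<open>(r\<^sub>1 - s\<^sub>2) u + (r\<^sub>2 - s\<^sub>2) v\<close> and
  \<open>(r\<^sub>1 - s\<^sub>1) u + (r\<^sub>2 - s\<^sub>1) v\<close>. So the four lines have cross ratio
  \<open>(r\<^sub>1 - s\<^sub>2)(r\<^sub>2 - s\<^sub>1) / ((r\<^sub>1 - s\<^sub>1)(r\<^sub>2 - s\<^sub>2))\<close>, which is real because all four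
  eigenvalues lie on the unit circle, and four points of \<open>\<CC>P\<^sup>1\<close> with real cross ratio lie on a circle.\<close>

definition det2 :: "'a::comm_ring_1^2 \<Rightarrow> 'a^2 \<Rightarrow> 'a" where
  "det2 u v = u$1 * v$2 - u$2 * v$1"

lemma vec2_eq_iff: "(u::'a^2) = v \<longleftrightarrow> u$1 = v$1 \<and> u$2 = v$2"
  by (simp add: vec_eq_iff forall_2)

lemma lincomb_if_det2_nonzero:
  fixes u v z :: "'a::field^2"
  assumes "det2 u v \<noteq> 0"
  obtains a b where "z = a *s u + b *s v"
proof
  have "det2 z v * u$i + det2 u z * v$i = det2 u v * z$i" for i
    using exhaust_2[of i] by (auto simp: det2_def algebra_simps)
  with assms show "z = (det2 z v / det2 u v) *s u + (det2 u z / det2 u v) *s v"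
    by (simp add: vec_eq_iff add_divide_distrib[symmetric])
qed

lemma in_cline_if_det2_eq_0:
  fixes u v :: "complex^2"
  assumes "u \<noteq> 0" and "det2 u v = 0"
  shows "v \<in> cline u"
proof (cases "u$1 = 0")
  case True
  with assms have "v = (v$2 / u$2) *s u"
    by (auto simp: vec2_eq_iff det2_def field_simps)
  then show ?thesis unfolding cline_def by blast
next
  case False
  with assms have "v = (v$1 / u$1) *s u"
    by (auto simp: vec2_eq_iff det2_def field_simps)
  then show ?thesis unfolding cline_def by blast
qed

lemma self_in_cline: "v \<in> cline v"
  unfolding cline_def by (metis (mono_tags) mem_Collect_eq vector_smult_lid)

lemma cline_neq_if_det2_nonzero:
  assumes "det2 u v \<noteq> 0"
  shows "cline u \<noteq> cline v"
proof
  assume "cline u = cline v"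
  then obtain c where "v = c *s u"
    using self_in_cline[of v] unfolding cline_def by blast
  with assms show False by (simp add: det2_def)
qed

lemma cline_smult:
  assumes "c \<noteq> 0"
  shows "cline (c *s v) = cline v"
proof -
  have "d *s v = (d / c) *s (c *s v)" for d
    using assms by simp
  then have "\<exists>e. d *s v = e *s (c *s v)" for d
    by blast
  then show ?thesis
    unfolding cline_def by auto
qed

lemma matrix_vector_mult_eigen_lincomb:
  fixes A :: "'a::field^'n^'n"
  assumes "A *v u = \<alpha> *s u" and "A *v v = \<beta> *s v"
  shows "A *v (a *s u + b *s v) - c *s (a *s u + b *s v)
           = (a * (\<alpha> - c)) *s u + (b * (\<beta> - c)) *s v"
  using assms
  by (simp add: vector_scalar_commute vec_eq_iff algebra_simps)

lemma det2_eigenvectors_nonzero: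
  fixes A :: "complex^2^2"
  assumes "A *v u = \<alpha> *s u" and "A *v v = \<beta> *s v" and "u \<noteq> 0" and "v \<noteq> 0" and "\<alpha> \<noteq> \<beta>"
  shows "det2 u v \<noteq> 0"
proof
  assume "det2 u v = 0"
  then obtain c where v: "v = c *s u"
    using in_cline_if_det2_eq_0[OF \<open>u \<noteq> 0\<close>] unfolding cline_def by blast
  then have "\<beta> *s v = \<alpha> *s v"
    using assms(1,2) by (auto simp: vector_scalar_commute mult.commute)
  with assms(4,5) show False
    by (metis vector_mul_rcancel)
qed

lemma eigenspace2_eq_cline:
  fixes A :: "complex^2^2"
  assumes "A *v u = \<alpha> *s u" and "A *v v = \<beta> *s v" and "u \<noteq> 0" and "v \<noteq> 0" and "\<alpha> \<noteq> \<beta>"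
  shows "eigenspace2 A \<alpha> = cline u"
proof (intro set_eqI iffI)
  fix z
  assume "z \<in> eigenspace2 A \<alpha>"
  moreover obtain a b where z: "z = a *s u + b *s v"
    using lincomb_if_det2_nonzero[OF det2_eigenvectors_nonzero[OF assms]] by blast
  ultimately have "(b * (\<beta> - \<alpha>)) *s v = 0"
    using matrix_vector_mult_eigen_lincomb[OF assms(1,2), of a b \<alpha>]
    by (simp add: eigenspace2_def)
  with assms(4,5) have "z = a *s u"
    by (simp add: z)
  then show "z \<in> cline u"
    unfolding cline_def by blast
next
  fix z
  assume "z \<in> cline u"
  then obtain c where "z = c *s u"
    unfolding cline_def by blast
  then show "z \<in> eigenspace2 A \<alpha>"
    using assms(1) by (simp add: eigenspace2_def vector_scalar_commute)
qed

lemma eigenspace2_eq_cline_residual: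
  fixes A :: "complex^2^2"
  assumes "A *v u = \<alpha> *s u" and "A *v v = \<beta> *s v" and "u \<noteq> 0" and "v \<noteq> 0" and "\<alpha> \<noteq> \<beta>"
    and "A *v w \<noteq> \<beta> *s w"
  shows "eigenspace2 A \<alpha> = cline (A *v w - \<beta> *s w)"
proof -
  obtain a b where w: "w = a *s u + b *s v"
    using lincomb_if_det2_nonzero[OF det2_eigenvectors_nonzero[OF assms(1-5)]] by blast
  then have residual: "A *v w - \<beta> *s w = (a * (\<alpha> - \<beta>)) *s u"
    using matrix_vector_mult_eigen_lincomb[OF assms(1,2), of a b \<beta>] by simp
  with assms(6) have "a * (\<alpha> - \<beta>) \<noteq> 0"
    by auto
  then show ?thesis
    using eigenspace2_eq_cline[OF assms(1-5)] by (simp add: residual cline_smult)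
qed

lemma cross_ratio_unit_circle_real:
  fixes a b c d :: complex
  assumes "cmod a = 1" and "cmod b = 1" and "cmod c = 1" and "cmod d = 1"
  shows "(a - c) * (b - d) / ((a - d) * (b - c)) \<in> \<real>"
proof -
  have cnj_unit: "cnj z = inverse z" if "cmod z = 1" for z
    using that complex_norm_square[of z] by (simp add: inverse_unique)
  have nonzero: "a \<noteq> 0" "b \<noteq> 0" "c \<noteq> 0" "d \<noteq> 0"
    using assms by auto
  have "cnj ((a - c) * (b - d) / ((a - d) * (b - c)))
      = (inverse a - inverse c) * (inverse b - inverse d) / ((inverse a - inverse d) * (inverse b - inverse c))"
    using assms by (simp add: cnj_unit)
  also have "\<dots> = ((a - c) * (b - d) / (a * b * c * d)) / ((a - d) * (b - c) / (a * b * c * d))"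
    using nonzero by (simp add: divide_simps) (simp add: algebra_simps)
  also have "\<dots> = (a - c) * (b - d) / ((a - d) * (b - c))"
    using nonzero by simp
  finally show ?thesis
    by (simp add: Reals_cnj_iff)
qed

lemma on_circle_CP1_lincomb:
  fixes u v :: "complex^2"
  assumes "det2 u v \<noteq> 0" and "a \<noteq> 0" and "b \<noteq> 0" and "c \<noteq> 0"
    and "a * d / (b * c) \<in> \<real>"
  shows "on_circle_CP1 {cline u, cline v, cline (a *s u + b *s v), cline (c *s u + d *s v)}"
proof -
  obtain \<rho> where \<rho>: "a * d / (b * c) = complex_of_real \<rho>"
    using assms(5) Reals_cases by blast
  define t where "t = b / a"
  define M :: "complex^2^2" where "M = (\<chi> i j. if j = 1 then u$i else t * v$i)"
  \<comment> \<open>\<open>M\<close> maps the real points \<open>(1:0), (0:1), (1:1), (1:\<rho>)\<close> to the four lines.\<close>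
  have M_real: "M *v (\<chi> i. complex_of_real (vector [x, y] $ i)) = of_real x *s u + (of_real y * t) *s v"
    for x y
    unfolding M_def by (simp add: vec_eq_iff matrix_vector_mult_def sum_2 algebra_simps)
  have "det M = t * det2 u v"
    unfolding M_def det_2 det2_def by (simp add: algebra_simps)
  with assms(1-3) have "invertible M"
    by (simp add: invertible_det_nz t_def)
  have "cline u = cline (M *v (\<chi> i. complex_of_real (vector [1, 0] $ i)))"
    unfolding M_real by simp
  moreover have "cline v = cline (M *v (\<chi> i. complex_of_real (vector [0, 1] $ i)))"
    unfolding M_real using assms(2,3) by (simp add: t_def cline_smult)
  moreover have "cline (a *s u + b *s v) = cline (M *v (\<chi> i. complex_of_real (vector [1, 1] $ i)))"
  proof -
    have "a *s u + b *s v = a *s (M *v (\<chi> i. complex_of_real (vector [1, 1] $ i)))"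
      unfolding M_real using assms(2) by (simp add: t_def vec_eq_iff algebra_simps)
    then show ?thesis
      using assms(2) by (simp add: cline_smult)
  qed
  moreover have "cline (c *s u + d *s v) = cline (M *v (\<chi> i. complex_of_real (vector [1, \<rho>] $ i)))"
  proof -
    have "c *s u + d *s v = c *s (M *v (\<chi> i. complex_of_real (vector [1, \<rho>] $ i)))"
      unfolding M_real \<rho>[symmetric] using assms(2-4) by (simp add: t_def vec_eq_iff field_simps)
    then show ?thesis
      using assms(4) by (simp add: cline_smult)
  qed
  moreover have "vector [1, y] \<noteq> (0::real^2)" "vector [0, 1] \<noteq> (0::real^2)" for y :: real
    by (simp_all add: vec_eq_iff forall_2)
  ultimately show ?thesis
    unfolding on_circle_CP1_def using \<open>invertible M\<close> by blast
qed

lemma cline_lincomb_pairwise_distinct: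
  fixes u v :: "complex^2"
  assumes "det2 u v \<noteq> 0" and "a \<noteq> 0" and "b \<noteq> 0" and "c \<noteq> 0" and "d \<noteq> 0"
    and "a * d \<noteq> b * c"
  shows "cline u \<noteq> cline v \<and> cline u \<noteq> cline (a *s u + b *s v) \<and>
         cline u \<noteq> cline (c *s u + d *s v) \<and> cline v \<noteq> cline (a *s u + b *s v) \<and>
         cline v \<noteq> cline (c *s u + d *s v) \<and> cline (a *s u + b *s v) \<noteq> cline (c *s u + d *s v)"
proof -
  have "det2 u (x *s u + y *s v) = y * det2 u v" "det2 v (x *s u + y *s v) = - x * det2 u v" for x y
    by (simp_all add: det2_def algebra_simps)
  moreover have "det2 (a *s u + b *s v) (c *s u + d *s v) = (a * d - b * c) * det2 u v"
    by (simp add: det2_def algebra_simps)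
  ultimately show ?thesis
    using assms by (intro conjI cline_neq_if_det2_nonzero) simp_all
qed

lemma matrix_mul_matrix_inv_right:
  assumes "invertible A"
  shows "A ** matrix_inv A = mat 1"
  using someI_ex[OF assms[unfolded invertible_def]] unfolding matrix_inv_def by blast

lemma common_vector_if_eigenvalue_1:
  assumes "invertible S" and "is_eigenvalue (R ** matrix_inv S) 1"
  obtains w where "w \<noteq> 0" and "R *v w = S *v w"
proof -
  obtain v where v: "v \<noteq> 0" "(R ** matrix_inv S) *v v = v"
    using assms(2) unfolding is_eigenvalue_def by auto
  define w where "w = matrix_inv S *v v"
  have "S *v w = v"
    unfolding w_def matrix_vector_mul_assoc matrix_mul_matrix_inv_right[OF assms(1)] by simp
  moreover have "R *v w = v"
    using v(2) unfolding w_def matrix_vector_mul_assoc by simp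
  moreover have "w \<noteq> 0"
    using \<open>S *v w = v\<close> v(1) by auto
  ultimately show thesis
    using that by simp
qed

lemma eigenvector_coordinates_nonzero:
  fixes R S :: "complex^2^2"
  assumes "R *v e1 = r1 *s e1" and "R *v e2 = r2 *s e2"
    and "w = a *s e1 + b *s e2" and "w \<noteq> 0" and "R *v w = S *v w"
    and "\<not> is_eigenvalue S r1" and "\<not> is_eigenvalue S r2"
  shows "a \<noteq> 0" and "b \<noteq> 0"
proof -
  have eigen_if_multiple: "is_eigenvalue S r" if "w = c *s e" "R *v e = r *s e" for c r e
    using that assms(4,5) unfolding is_eigenvalue_def
    by (metis vector_scalar_commute vector_smult_assoc mult.commute)
  show "a \<noteq> 0"
    using eigen_if_multiple[of b e2 r2] assms(2,3,7) by auto
  show "b \<noteq> 0"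
    using eigen_if_multiple[of a e1 r1] assms(1,3,6) by auto
qed

lemma eigenline_configuration_distinct_on_circle:
  fixes u v :: "complex^2" and r1 r2 s1 s2 :: complex
  assumes "det2 u v \<noteq> 0"
    and "cmod r1 = 1" and "cmod r2 = 1" and "cmod s1 = 1" and "cmod s2 = 1"
    and "r1 \<noteq> r2" and "s1 \<noteq> s2" and "{r1, r2} \<inter> {s1, s2} = {}"
  defines "p \<equiv> (r1 - s2) *s u + (r2 - s2) *s v" and "q \<equiv> (r1 - s1) *s u + (r2 - s1) *s v"
  shows "cline u \<noteq> cline v \<and> cline u \<noteq> cline p \<and> cline u \<noteq> cline q \<and>
         cline v \<noteq> cline p \<and> cline v \<noteq> cline q \<and> cline p \<noteq> cline q \<and>
         on_circle_CP1 {cline u, cline v, cline p, cline q}"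
proof -
  have differences_nonzero: "r1 - s1 \<noteq> 0" "r1 - s2 \<noteq> 0" "r2 - s1 \<noteq> 0" "r2 - s2 \<noteq> 0"
    using assms(8) by auto
  have "(r1 - s2) * (r2 - s1) - (r2 - s2) * (r1 - s1) = (r1 - r2) * (s2 - s1)"
    by (simp add: algebra_simps)
  with assms(6,7) have "(r1 - s2) * (r2 - s1) \<noteq> (r2 - s2) * (r1 - s1)"
    by auto
  moreover have "(r1 - s2) * (r2 - s1) / ((r2 - s2) * (r1 - s1)) \<in> \<real>"
    using cross_ratio_unit_circle_real[OF assms(2,3,5,4)] by (simp add: mult.commute)
  ultimately show ?thesis
    unfolding p_def q_def
    using cline_lincomb_pairwise_distinct[OF assms(1) differences_nonzero(2,4,1,3)]
      on_circle_CP1_lincomb[OF assms(1) differences_nonzero(2,4,1)]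
    by blast
qed

theorem lemma22:
  fixes R S :: "complex^2^2" and r1 r2 s1 s2 :: complex
  assumes "invertible R" and "invertible S"
    and "diagonalizable2 R" and "diagonalizable2 S"
    and "{r. is_eigenvalue R r} = {r1, r2}"
    and "{s. is_eigenvalue S s} = {s1, s2}"
    and "cmod r1 = 1" and "cmod r2 = 1" and "cmod s1 = 1" and "cmod s2 = 1"
    and "r1 \<noteq> r2" and "s1 \<noteq> s2"
    and "{r1, r2} \<inter> {s1, s2} = {}"
    and "is_eigenvalue (R ** matrix_inv S) 1"
  shows "eigenspace2 R r1 \<noteq> eigenspace2 R r2 \<and>
         eigenspace2 R r1 \<noteq> eigenspace2 S s1 \<and>
         eigenspace2 R r1 \<noteq> eigenspace2 S s2 \<and>
         eigenspace2 R r2 \<noteq> eigenspace2 S s1 \<and>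
         eigenspace2 R r2 \<noteq> eigenspace2 S s2 \<and>
         eigenspace2 S s1 \<noteq> eigenspace2 S s2 \<and>
         on_circle_CP1 {eigenspace2 R r1, eigenspace2 R r2,
                        eigenspace2 S s1, eigenspace2 S s2}"
proof -
  have eigenvalues: "is_eigenvalue R r1" "is_eigenvalue R r2" "is_eigenvalue S s1" "is_eigenvalue S s2"
    and spectra_disjoint: "\<not> is_eigenvalue R s1" "\<not> is_eigenvalue R s2"
      "\<not> is_eigenvalue S r1" "\<not> is_eigenvalue S r2"
    using assms(5,6,13) by (simp_all add: set_eq_iff) blast+
  obtain e1 e2 f1 f2 where
    e1: "R *v e1 = r1 *s e1" "e1 \<noteq> 0" and e2: "R *v e2 = r2 *s e2" "e2 \<noteq> 0" and
    f1: "S *v f1 = s1 *s f1" "f1 \<noteq> 0" and f2: "S *v f2 = s2 *s f2" "f2 \<noteq> 0"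
    using eigenvalues unfolding is_eigenvalue_def by metis
  obtain w where "w \<noteq> 0" and Rw: "R *v w = S *v w"
    using common_vector_if_eigenvalue_1 assms(2,14) by blast
  with spectra_disjoint(1,2) have "S *v w \<noteq> s1 *s w" "S *v w \<noteq> s2 *s w"
    unfolding is_eigenvalue_def by metis+
  have "det2 e1 e2 \<noteq> 0"
    using det2_eigenvectors_nonzero[OF e1(1) e2(1) e1(2) e2(2) assms(11)] .
  then obtain a b where w: "w = a *s e1 + b *s e2"
    using lincomb_if_det2_nonzero by blast
  have "a \<noteq> 0" "b \<noteq> 0"
    using eigenvector_coordinates_nonzero[OF e1(1) e2(1) w \<open>w \<noteq> 0\<close> Rw spectra_disjoint(3,4)] .
  with \<open>det2 e1 e2 \<noteq> 0\<close> have "det2 (a *s e1) (b *s e2) \<noteq> 0"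
    by (simp add: det2_def algebra_simps)
  have "eigenspace2 R r1 = cline (a *s e1)" "eigenspace2 R r2 = cline (b *s e2)"
    using eigenspace2_eq_cline[OF e1(1) e2(1) e1(2) e2(2)] eigenspace2_eq_cline[OF e2(1) e1(1) e2(2) e1(2)]
      assms(11) \<open>a \<noteq> 0\<close> \<open>b \<noteq> 0\<close> by (simp_all add: cline_smult)
  moreover have "eigenspace2 S s1 = cline (R *v w - s2 *s w)" "eigenspace2 S s2 = cline (R *v w - s1 *s w)"
    using eigenspace2_eq_cline_residual[OF f1(1) f2(1) f1(2) f2(2) assms(12) \<open>S *v w \<noteq> s2 *s w\<close>]
      eigenspace2_eq_cline_residual[OF f2(1) f1(1) f2(2) f1(2) _ \<open>S *v w \<noteq> s1 *s w\<close>] assms(12)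
    by (simp_all add: Rw)
  moreover have "R *v w - s *s w = (r1 - s) *s (a *s e1) + (r2 - s) *s (b *s e2)" for s
    using matrix_vector_mult_eigen_lincomb[OF e1(1) e2(1), of a b s] by (simp add: w mult.commute)
  ultimately show ?thesis
    using eigenline_configuration_distinct_on_circle[OF \<open>det2 (a *s e1) (b *s e2) \<noteq> 0\<close> assms(7-13)]
    by simp
qed

end
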